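(* Let $H=([0,\infty],\le,u,\bullet)$ be a partially ordered monoid on the extended non-negative reals (with the usual order), and let $(d_X)_X$ be an $H$-composable family of divergences, $d_X:D X\times D X\to[0,\infty]$, indexed by sets $X$. For $\delta\in[0,\infty]$ and a set $X$ define $$R(d)(\delta)(X)=(D X,\{(\mu,\nu): d_X(\mu,\nu)\le\delta,\ d_X(\nu,\mu)\le\delta\}).$$ Then $R(d)$ is a monotone map $([0,\infty],\le)\to\mathbf{Ord}(q,D)$ and is an $H$-graded $\times$-parameterized assignment of $\mathsf{RSRel}$ on the distribution monad $\mathcal{D}$; i.e. for all sets $X,Y$, all $\alpha,\beta\in[0,\infty]$, all $h,h':X\to D Y$ with $h(x)\sim_{R(d)(\alpha)(Y)}h'(x)$ for every $x$, and all $\mu\sim_{R(d)(\beta)(X)}\nu$, we have $h^\dagger(\mu)\sim_{R(d)(\beta\bullet\alpha)(Y)}h'^\dagger(\nu)$.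
   Context: $D X$ is the set of discrete probability distributions on $X$; for $f:X\to D Y$, $f^\dagger(\mu)(y)=\sum_x f(x)(y)\mu(x)$. A divergence on $D X$ is a function $d_X:D X\times D X\to[0,\infty]$ with $d_X(\mu,\mu)=0$ (it need not be symmetric nor satisfy the triangle inequality). The family $(d_X)$ is $H$-composable if for all sets $X,Y$, all $f,g:X\to D Y$ and $\mu,\nu\in D X$: $d_Y(f^\dagger(\mu),g^\dagger(\nu))\le d_X(\mu,\nu)\bullet\sup_{x\in X}d_Y(f(x),g(x))$. $\mathsf{RSRel}$ is the category of sets with a reflexive symmetric relation and relation-preserving maps; $q$ its forgetful functor to $\mathsf{Set}$; $\mathbf{Ord}(q,D)$ is the class of maps assigning to each set $X$ a reflexive symmetric relation on $D X$, preordered by pointwise inclusion. In $\mathsf{RSRel}$, product relates pairs componentwise, and for a set $X$ and object $Z$, $X\dot\pitchfork Z$ is the set of functions $X\to|Z|$ with $h\sim h'$ iff $h(x)\sim h'(x)$ for all $x$; an $H$-graded $\times$-parameterized assignment $\Delta$ is a monotone map from $H$ to $\mathbf{Ord}(q,D)$ such that $(h,\mu)\mapsto h^\dagger(\mu)$ is relation-preserving $(X\dot\pitchfork\Delta\alpha Y)\times\Delta\beta X\to\Delta(\beta\bullet\alpha)Y$. *)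

theory Defs
  imports "HOL-Probability.Probability_Mass_Function"
begin

text \<open>Discrete distributions on a set X are modelled as 'a pmf (X = the type 'a);
  Kleisli extension f-dagger(mu) is bind_pmf mu f.\<close>

definition pomonoid :: "(ennreal \<Rightarrow> ennreal \<Rightarrow> ennreal) \<Rightarrow> ennreal \<Rightarrow> bool" where
  "pomonoid bul u \<longleftrightarrow>
     (\<forall>a b c. bul (bul a b) c = bul a (bul b c)) \<and>
     (\<forall>a. bul u a = a \<and> bul a u = a) \<and>
     (\<forall>a a' b b'. a \<le> a' \<longrightarrow> b \<le> b' \<longrightarrow> bul a b \<le> bul a' b')"

definition divergence :: "('a pmf \<Rightarrow> 'a pmf \<Rightarrow> ennreal) \<Rightarrow> bool" where
  "divergence d \<longleftrightarrow> (\<forall>\<mu>. d \<mu> \<mu> = 0)"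

definition H_composable ::
  "(ennreal \<Rightarrow> ennreal \<Rightarrow> ennreal) \<Rightarrow> ('a pmf \<Rightarrow> 'a pmf \<Rightarrow> ennreal) \<Rightarrow> ('b pmf \<Rightarrow> 'b pmf \<Rightarrow> ennreal) \<Rightarrow> bool" where
  "H_composable bul dX dY \<longleftrightarrow>
     (\<forall>(f::'a \<Rightarrow> 'b pmf) g \<mu> \<nu>.
        dY (bind_pmf \<mu> f) (bind_pmf \<nu> g) \<le> bul (dX \<mu> \<nu>) (SUP x. dY (f x) (g x)))"

definition Rd :: "('a pmf \<Rightarrow> 'a pmf \<Rightarrow> ennreal) \<Rightarrow> ennreal \<Rightarrow> ('a pmf \<times> 'a pmf) set" where
  "Rd d \<delta> = {(\<mu>, \<nu>). d \<mu> \<nu> \<le> \<delta> \<and> d \<nu> \<mu> \<le> \<delta>}"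

end

theory Submission
  imports Defs
begin

lemma pomonoid_mono:
  assumes "pomonoid bul u"
  shows "\<forall>a a' b b'. a \<le> a' \<longrightarrow> b \<le> b' \<longrightarrow> bul a b \<le> bul a' b'"
  using assms unfolding pomonoid_def by blast

lemma refl_Rd:
  assumes "divergence d"
  shows "refl (Rd d \<delta>)"
  using assms by (simp add: refl_on_def Rd_def divergence_def)

lemma sym_Rd: "sym (Rd d \<delta>)"
  by (auto simp: sym_def Rd_def)

lemma Rd_mono:
  assumes "\<alpha> \<le> \<beta>"
  shows "Rd d \<alpha> \<subseteq> Rd d \<beta>"
  using assms by (auto simp: Rd_def intro: order_trans)

lemma H_composable_bind_pmf_le:
  assumes mono: "\<forall>a a' b b'. a \<le> a' \<longrightarrow> b \<le> b' \<longrightarrow> bul a b \<le> bul a' b'"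
    and comp: "H_composable bul dX dY"
    and pointwise: "\<And>x. dY (f x) (g x) \<le> \<alpha>"
    and "dX \<mu> \<nu> \<le> \<beta>"
  shows "dY (bind_pmf \<mu> f) (bind_pmf \<nu> g) \<le> bul \<beta> \<alpha>"
proof -
  have "dY (bind_pmf \<mu> f) (bind_pmf \<nu> g) \<le> bul (dX \<mu> \<nu>) (SUP x. dY (f x) (g x))"
    using comp unfolding H_composable_def by blast
  also have "\<dots> \<le> bul \<beta> \<alpha>"
    using mono \<open>dX \<mu> \<nu> \<le> \<beta>\<close> pointwise by (simp add: SUP_least)
  finally show ?thesis .
qed

lemma bind_pmf_in_Rd:
  assumes mono: "\<forall>a a' b b'. a \<le> a' \<longrightarrow> b \<le> b' \<longrightarrow> bul a b \<le> bul a' b'"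
    and comp: "H_composable bul dX dY"
    and "\<forall>x. (h x, h' x) \<in> Rd dY \<alpha>" and "(\<mu>, \<nu>) \<in> Rd dX \<beta>"
  shows "(bind_pmf \<mu> h, bind_pmf \<nu> h') \<in> Rd dY (bul \<beta> \<alpha>)"
  using assms(3,4) H_composable_bind_pmf_le[OF mono comp]
  by (simp add: Rd_def)

theorem theorem7:
  fixes bul :: "ennreal \<Rightarrow> ennreal \<Rightarrow> ennreal" and u :: ennreal
    and dX :: "'a pmf \<Rightarrow> 'a pmf \<Rightarrow> ennreal"
    and dY :: "'b pmf \<Rightarrow> 'b pmf \<Rightarrow> ennreal"
  assumes "pomonoid bul u"
    and "divergence dX" and "divergence dY"
    and "H_composable bul dX dY"
  shows "(\<forall>\<delta>. refl (Rd dX \<delta>) \<and> sym (Rd dX \<delta>))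
    \<and> (\<forall>\<delta>. refl (Rd dY \<delta>) \<and> sym (Rd dY \<delta>))
    \<and> (\<forall>\<alpha> \<beta>. \<alpha> \<le> \<beta> \<longrightarrow> Rd dX \<alpha> \<subseteq> Rd dX \<beta>)
    \<and> (\<forall>\<alpha> \<beta>. \<alpha> \<le> \<beta> \<longrightarrow> Rd dY \<alpha> \<subseteq> Rd dY \<beta>)
    \<and> (\<forall>\<alpha> \<beta> (h::'a \<Rightarrow> 'b pmf) h' \<mu> \<nu>.
         (\<forall>x. (h x, h' x) \<in> Rd dY \<alpha>) \<longrightarrow> (\<mu>, \<nu>) \<in> Rd dX \<beta> \<longrightarrow>
         (bind_pmf \<mu> h, bind_pmf \<nu> h') \<in> Rd dY (bul \<beta> \<alpha>))"
  by (simp add: refl_Rd[OF assms(2)] refl_Rd[OF assms(3)] sym_Rd Rd_mono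
      bind_pmf_in_Rd[OF pomonoid_mono[OF assms(1)] assms(4)])

end
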